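(* Suppose there is $K>0$ such that $\|\nabla_{(\theta,x)}\ell(\theta,x)-\nabla_{(\theta,x)}\ell(\theta',x')\|\le K\|(\theta,x)-(\theta',x')\|$ for all $(\theta,x),(\theta',x')\in\mathbb{R}^{d_\theta}\times\mathbb{R}^{d_x}$. Then there is a constant $K_{\mathcal{F}}>0$ such that $$\|\nabla_\theta\mathcal{F}(\theta,q)-\nabla_\theta\mathcal{F}(\theta',q')\|\le K_{\mathcal{F}}\big(\|\theta-\theta'\|+\mathsf{W}_1(q,q')\big)$$ for all $\theta,\theta'\in\mathbb{R}^{d_\theta}$ and $q,q'\in\mathcal{P}(\mathbb{R}^{2d_x})$.
   Context: $\ell(\theta,x)=\log p_\theta(y,x)$ for a latent variable model $p_\theta(y,x)$ with fixed data $y$. $\mathcal{P}(\mathbb{R}^{2d_x})$: probability measures on $\mathbb{R}^{d_x}\times\mathbb{R}^{d_x}$ with Lebesgue density and finite second moment; $\mathsf{W}_1$ is the Wasserstein-1 distance. Here $\nabla_\theta\mathcal{F}(\theta,q):=-\int\nabla_\theta\ell(\theta,x)\,q(\mathrm{d}x,\mathrm{d}u)$ is the $\theta$-gradient of the momentum-enriched free energy $\mathcal{F}(\theta,m,q)=\int\log\frac{q(x,u)}{p_\theta(y,x)r_{\eta_x}(u)}q(x,u)\mathrm{d}x\mathrm{d}u+\frac{\eta_\theta}{2}\|m\|^2$ (with $r_{\eta_x}=\mathcal{N}(0,\eta_x^{-1}I)$), which does not depend on $m$. *)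

theory Defs
  imports "HOL-Analysis.Analysis" "HOL-Probability.Probability"
begin

definition P2ac :: "('b::euclidean_space \<times> 'b) measure set" where
  "P2ac = {q. prob_space q \<and> sets q = sets borel \<and>
              absolutely_continuous lborel q \<and>
              (\<integral>\<^sup>+ z. ennreal ((norm z)\<^sup>2) \<partial>q) < \<infinity>}"

definition couplings :: "'c::euclidean_space measure \<Rightarrow> 'c measure \<Rightarrow> ('c \<times> 'c) measure set" where
  "couplings q q' = {\<gamma>. prob_space \<gamma> \<and> sets \<gamma> = sets borel \<and>
                       distr \<gamma> borel fst = q \<and> distr \<gamma> borel snd = q'}"

definition W1 :: "'c::euclidean_space measure \<Rightarrow> 'c measure \<Rightarrow> ennreal" where
  "W1 q q' = (INF \<gamma>\<in>couplings q q'. \<integral>\<^sup>+ p. ennreal (dist (fst p) (snd p)) \<partial>\<gamma>)"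

text \<open>theta-gradient of the momentum-enriched free energy:
  - \<integral> \<nabla>_theta l(theta,x) q(dx,du), where G is the full gradient of l.\<close>
definition grad_theta_F ::
  "('a::euclidean_space \<times> 'b::euclidean_space \<Rightarrow> 'a \<times> 'b) \<Rightarrow> 'a \<Rightarrow> ('b \<times> 'b) measure \<Rightarrow> 'a" where
  "grad_theta_F G \<theta> q = - (\<integral> p. fst (G (\<theta>, fst p)) \<partial>q)"

end

theory Submission
  imports Defs
begin

text \<open>Put \<open>h t (x, u) = \<nabla>\<^sub>\<theta> l(t, x)\<close>, so that \<open>\<nabla>\<^sub>\<theta>F(\<theta>, q) = - \<integral> h \<theta> dq\<close>; the function \<open>h\<close> is
  \<open>K\<close>-Lipschitz both in \<open>t\<close> and in \<open>(x, u)\<close>. Going from \<open>\<integral> h \<theta> dq\<close> to \<open>\<integral> h \<theta>' dq'\<close> through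
  \<open>\<integral> h \<theta>' dq\<close>, the first step costs at most \<open>K \<parallel>\<theta> - \<theta>'\<parallel>\<close> pointwise; the second costs at most
  \<open>K \<integral> dist d\<gamma>\<close> for every coupling \<open>\<gamma>\<close> of \<open>q\<close> and \<open>q'\<close>, hence at most \<open>K W\<^sub>1(q, q')\<close>.
  Finite first moments make all integrals and \<open>W\<^sub>1(q, q')\<close> finite, so \<open>K\<^sub>F = K\<close> works.\<close>

lemma integral_marginal:
  fixes f :: "'c::topological_space \<Rightarrow> 'd::{banach, second_countable_topology}"
  assumes sets_eq: "sets \<gamma> = sets borel" and \<pi>: "\<pi> \<in> borel_measurable borel"
    and marginal: "distr \<gamma> borel \<pi> = \<mu>" and f: "f \<in> borel_measurable borel"
  shows "integrable \<gamma> (\<lambda>p. f (\<pi> p)) \<longleftrightarrow> integrable \<mu> f"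
    and "(\<integral>p. f (\<pi> p) \<partial>\<gamma>) = integral\<^sup>L \<mu> f"
proof -
  have \<pi>': "\<pi> \<in> \<gamma> \<rightarrow>\<^sub>M borel"
    using \<pi> by (simp add: measurable_cong_sets[OF sets_eq refl])
  show "integrable \<gamma> (\<lambda>p. f (\<pi> p)) \<longleftrightarrow> integrable \<mu> f"
    using integrable_distr_eq[OF \<pi>' f] marginal by simp
  show "(\<integral>p. f (\<pi> p) \<partial>\<gamma>) = integral\<^sup>L \<mu> f"
    using integral_distr[OF \<pi>' f] marginal by simp
qed

lemma borel_measurable_fst: "fst \<in> borel_measurable (borel :: ('c::topological_space \<times> 'd::topological_space) measure)"
  and borel_measurable_snd: "snd \<in> borel_measurable (borel :: ('c \<times> 'd) measure)"
  by (rule borel_measurable_continuous_onI, rule continuous_on_fst continuous_on_snd, rule continuous_on_id)+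

lemma P2ac_integrable_norm:
  assumes "q \<in> P2ac"
  shows "integrable q norm"
proof -
  interpret prob_space q
    using assms by (simp add: P2ac_def)
  have sets_eq: "sets q = sets borel"
    using assms by (simp add: P2ac_def)
  have norm_meas: "norm \<in> borel_measurable q"
    by (simp add: measurable_cong_sets[OF sets_eq refl])
  have "integrable q (\<lambda>z. (norm z)\<^sup>2)"
    using assms norm_meas by (auto simp: P2ac_def integrable_iff_bounded)
  then show ?thesis
    using square_integrable_imp_integrable[OF norm_meas] by simp
qed

lemma integrable_lipschitz_on:
  fixes f :: "'c::real_normed_vector \<Rightarrow> 'd::{banach, second_countable_topology}"
  assumes lip: "L-lipschitz_on UNIV f" and "finite_measure M"
    and sets_eq: "sets M = sets borel" and "integrable M norm"
  shows "integrable M f"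
proof (rule Bochner_Integration.integrable_bound[where f="\<lambda>x. norm (f 0) + L * norm x"])
  show "integrable M (\<lambda>x. norm (f 0) + L * norm x)"
    using assms by (simp add: finite_measure.integrable_const)
  show "f \<in> borel_measurable M"
    using lipschitz_on_continuous_on[OF lip]
    by (simp add: measurable_cong_sets[OF sets_eq refl] borel_measurable_continuous_onI)
  have "norm (f x) \<le> norm (f 0) + L * norm x" for x
    using lipschitz_on_normD[OF lip, of x 0] norm_triangle_sub[of "f x" "f 0"] by simp
  then show "AE x in M. norm (f x) \<le> norm (norm (f 0) + L * norm x)"
    using lipschitz_on_nonneg[OF lip] by (auto intro: order_trans)
qed

lemma (in prob_space) norm_integral_diff_le:
  fixes f g :: "'a \<Rightarrow> 'b::{banach, second_countable_topology}"
  assumes f: "integrable M f" and g: "integrable M g" and bound: "\<And>x. norm (f x - g x) \<le> c"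
  shows "norm (integral\<^sup>L M f - integral\<^sup>L M g) \<le> c"
proof -
  have "norm (integral\<^sup>L M f - integral\<^sup>L M g) = norm (\<integral>x. f x - g x \<partial>M)"
    using f g by simp
  also have "\<dots> \<le> (\<integral>x. norm (f x - g x) \<partial>M)"
    by (rule integral_norm_bound)
  also have "\<dots> \<le> (\<integral>x. c \<partial>M)"
    using f g bound by (intro integral_mono) auto
  finally show ?thesis
    by (simp add: prob_space)
qed

lemma pair_measure_in_couplings:
  assumes "prob_space q" "prob_space q'" and sets_q: "sets q = sets borel" and sets_q': "sets q' = sets borel"
  shows "q \<Otimes>\<^sub>M q' \<in> couplings q q'"
proof -
  interpret q: prob_space q by fact
  interpret q': prob_space q' by fact
  interpret pair_prob_space q q' ..
  have "sets (q \<Otimes>\<^sub>M q') = sets (borel \<Otimes>\<^sub>M borel)"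
    using sets_q sets_q' by (rule sets_pair_measure_cong)
  then have sets_pair: "sets (q \<Otimes>\<^sub>M q') = sets borel"
    unfolding borel_prod .
  have "distr (q \<Otimes>\<^sub>M q') borel fst = distr (q \<Otimes>\<^sub>M q') q fst"
    using sets_q by (intro distr_cong) simp_all
  also have "\<dots> = q"
    by (rule q'.distr_pair_fst)
  finally have fst_marginal: "distr (q \<Otimes>\<^sub>M q') borel fst = q" .
  have "distr (q \<Otimes>\<^sub>M q') borel snd = distr (q \<Otimes>\<^sub>M q') q' snd"
    using sets_q' by (intro distr_cong) simp_all
  also have "\<dots> = distr (q' \<Otimes>\<^sub>M q) q' (snd \<circ> (\<lambda>(x, y). (y, x)))"
    by (subst distr_pair_swap) (simp add: distr_distr)
  also have "\<dots> = q'"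
    using q.distr_pair_fst by (simp add: comp_def case_prod_beta)
  finally have snd_marginal: "distr (q \<Otimes>\<^sub>M q') borel snd = q'" .
  show ?thesis
    unfolding couplings_def
    using prob_space_axioms sets_pair fst_marginal snd_marginal by simp
qed

lemma couplings_measurable_dist:
  assumes "\<gamma> \<in> couplings q q'"
  shows "(\<lambda>p. dist (fst p) (snd p)) \<in> borel_measurable \<gamma>"
proof -
  have sets_\<gamma>: "sets \<gamma> = sets borel"
    using assms by (simp add: couplings_def)
  show ?thesis
    by (intro borel_measurable_dist)
      (simp_all add: measurable_cong_sets[OF sets_\<gamma> refl] borel_measurable_fst borel_measurable_snd)
qed

lemma W1_lt_top:
  fixes q q' :: "'c::euclidean_space measure"
  assumes "prob_space q" "prob_space q'" "sets q = sets borel" "sets q' = sets borel"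
    and "integrable q norm" "integrable q' norm"
  shows "W1 q q' < \<infinity>"
proof -
  let ?\<gamma> = "q \<Otimes>\<^sub>M q'"
  have \<gamma>: "?\<gamma> \<in> couplings q q'"
    using assms by (intro pair_measure_in_couplings)
  then have sets_\<gamma>: "sets ?\<gamma> = sets borel"
    by (simp add: couplings_def)
  have "integrable ?\<gamma> (\<lambda>p. norm (fst p))" "integrable ?\<gamma> (\<lambda>p. norm (snd p))"
    using \<gamma> assms integral_marginal(1)[OF sets_\<gamma> borel_measurable_fst, of q norm]
      integral_marginal(1)[OF sets_\<gamma> borel_measurable_snd, of q' norm]
    by (simp_all add: couplings_def)
  then have "integrable ?\<gamma> (\<lambda>p. norm (fst p) + norm (snd p))"
    by simp
  then have "integrable ?\<gamma> (\<lambda>p. dist (fst p) (snd p))"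
    by (rule Bochner_Integration.integrable_bound[OF _ couplings_measurable_dist[OF \<gamma>]])
      (simp add: dist_norm norm_triangle_ineq4)
  then have "(\<integral>\<^sup>+ p. ennreal (dist (fst p) (snd p)) \<partial>?\<gamma>) < \<infinity>"
    by (simp add: integrable_iff_bounded)
  moreover have "W1 q q' \<le> (\<integral>\<^sup>+ p. ennreal (dist (fst p) (snd p)) \<partial>?\<gamma>)"
    unfolding W1_def using \<gamma> by (rule INF_lower)
  ultimately show ?thesis
    by simp
qed

lemma couplings_norm_integral_diff_le:
  fixes f :: "'c::euclidean_space \<Rightarrow> 'd::{banach, second_countable_topology}"
  assumes \<gamma>: "\<gamma> \<in> couplings q q'" and lip: "L-lipschitz_on UNIV f"
    and int_q: "integrable q f" and int_q': "integrable q' f"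
  shows "ennreal (norm (integral\<^sup>L q f - integral\<^sup>L q' f))
           \<le> ennreal L * (\<integral>\<^sup>+ p. ennreal (dist (fst p) (snd p)) \<partial>\<gamma>)"
proof -
  have sets_\<gamma>: "sets \<gamma> = sets borel"
    and fst_marginal: "distr \<gamma> borel fst = q" and snd_marginal: "distr \<gamma> borel snd = q'"
    using \<gamma> by (simp_all add: couplings_def)
  have f_meas: "f \<in> borel_measurable borel"
    using lipschitz_on_continuous_on[OF lip] by (rule borel_measurable_continuous_onI)
  note fst_int = integral_marginal[OF sets_\<gamma> borel_measurable_fst fst_marginal f_meas]
  note snd_int = integral_marginal[OF sets_\<gamma> borel_measurable_snd snd_marginal f_meas]
  have diff_int: "integrable \<gamma> (\<lambda>p. f (fst p) - f (snd p))"
    using fst_int(1) snd_int(1) int_q int_q' by simp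
  have "integral\<^sup>L q f - integral\<^sup>L q' f = (\<integral>p. f (fst p) - f (snd p) \<partial>\<gamma>)"
    using fst_int snd_int int_q int_q' by simp
  then have "ennreal (norm (integral\<^sup>L q f - integral\<^sup>L q' f))
      \<le> (\<integral>\<^sup>+ p. norm (f (fst p) - f (snd p)) \<partial>\<gamma>)"
    using integral_norm_bound_ennreal[OF diff_int] by simp
  also have "\<dots> \<le> (\<integral>\<^sup>+ p. ennreal L * ennreal (dist (fst p) (snd p)) \<partial>\<gamma>)"
    using lipschitz_on_normD[OF lip] lipschitz_on_nonneg[OF lip]
    by (intro nn_integral_mono) (simp add: dist_norm ennreal_mult[symmetric])
  also have "\<dots> = ennreal L * (\<integral>\<^sup>+ p. ennreal (dist (fst p) (snd p)) \<partial>\<gamma>)"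
    using couplings_measurable_dist[OF \<gamma>] by (intro nn_integral_cmult) simp
  finally show ?thesis .
qed

lemma norm_integral_diff_le_W1:
  fixes f :: "'c::euclidean_space \<Rightarrow> 'd::{banach, second_countable_topology}"
  assumes lip: "L-lipschitz_on UNIV f" and L: "0 < L"
    and int_q: "integrable q f" and int_q': "integrable q' f"
  shows "ennreal (norm (integral\<^sup>L q f - integral\<^sup>L q' f)) \<le> ennreal L * W1 q q'"
proof -
  let ?D = "norm (integral\<^sup>L q f - integral\<^sup>L q' f)"
  have L_cancel: "ennreal L * ennreal (?D / L) = ennreal ?D"
    using L by (simp add: ennreal_mult[symmetric])
  have "ennreal (?D / L) \<le> W1 q q'"
    unfolding W1_def
  proof (rule INF_greatest)
    fix \<gamma> assume "\<gamma> \<in> couplings q q'"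
    then have "ennreal L * ennreal (?D / L) \<le> ennreal L * (\<integral>\<^sup>+ p. ennreal (dist (fst p) (snd p)) \<partial>\<gamma>)"
      unfolding L_cancel using lip int_q int_q' by (rule couplings_norm_integral_diff_le)
    then show "ennreal (?D / L) \<le> (\<integral>\<^sup>+ p. ennreal (dist (fst p) (snd p)) \<partial>\<gamma>)"
      using L by (simp add: ennreal_mult_le_mult_iff)
  qed
  then have "ennreal L * ennreal (?D / L) \<le> ennreal L * W1 q q'"
    by (rule mult_left_mono) simp
  then show ?thesis
    unfolding L_cancel .
qed

lemma norm_integral_diff_le_enn2real_W1:
  fixes f :: "'c::euclidean_space \<Rightarrow> 'd::{banach, second_countable_topology}"
  assumes W1_fin: "W1 q q' < \<infinity>" and lip: "L-lipschitz_on UNIV f" and L: "0 < L"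
    and "integrable q f" "integrable q' f"
  shows "norm (integral\<^sup>L q f - integral\<^sup>L q' f) \<le> L * enn2real (W1 q q')"
proof -
  have "ennreal L * W1 q q' = ennreal (L * enn2real (W1 q q'))"
    using W1_fin L by (simp add: ennreal_mult less_top)
  then show ?thesis
    using norm_integral_diff_le_W1[OF lip L assms(4,5)] L by simp
qed



lemma lipschitz_on_fst: "1-lipschitz_on U fst"
  by (rule lipschitz_onI) (simp_all add: dist_fst_le)

lemma lipschitz_on_Pair_sections:
  fixes F :: "'a::real_normed_vector \<times> 'b::real_normed_vector \<Rightarrow> 'c::real_normed_vector"
  assumes lip: "K-lipschitz_on UNIV F"
  shows "K-lipschitz_on UNIV (\<lambda>x. F (t, x))" and "K-lipschitz_on UNIV (\<lambda>t. F (t, x))"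
proof -
  show "K-lipschitz_on UNIV (\<lambda>x. F (t, x))"
    using lipschitz_onD[OF lip, of "(t, _)" "(t, _)"] lipschitz_on_nonneg[OF lip]
    by (intro lipschitz_onI) (simp_all add: dist_Pair_Pair)
  show "K-lipschitz_on UNIV (\<lambda>t. F (t, x))"
    using lipschitz_onD[OF lip, of "(_, x)" "(_, x)"] lipschitz_on_nonneg[OF lip]
    by (intro lipschitz_onI) (simp_all add: dist_Pair_Pair)
qed

theorem propositionG1:
  fixes l :: "'a::euclidean_space \<times> 'b::euclidean_space \<Rightarrow> real"
    and G :: "'a \<times> 'b \<Rightarrow> 'a \<times> 'b"
    and K :: real
  assumes grad: "\<And>z. (l has_derivative (\<lambda>h. G z \<bullet> h)) (at z)"
    and K_pos: "K > 0"
    and lip: "\<And>z z'. norm (G z - G z') \<le> K * norm (z - z')"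
  shows "\<exists>KF > 0. \<forall>\<theta> \<theta>' q q'. q \<in> P2ac \<longrightarrow> q' \<in> P2ac \<longrightarrow>
           norm (grad_theta_F G \<theta> q - grad_theta_F G \<theta>' q')
             \<le> KF * (norm (\<theta> - \<theta>') + enn2real (W1 q q'))"
proof (intro exI[of _ K] conjI allI impI K_pos)
  \<comment> \<open>\<open>grad\<close> only identifies \<open>G\<close> as the gradient of \<open>l\<close>; the bound uses nothing but the Lipschitz property of \<open>G\<close>.\<close>
  fix \<theta> \<theta>' :: 'a and q q' :: "('b \<times> 'b) measure"
  assume q: "q \<in> P2ac" and q': "q' \<in> P2ac"
  define h where "h t = (\<lambda>p :: 'b \<times> 'b. fst (G (t, fst p)))" for t
  have "K-lipschitz_on UNIV G"
    using lip K_pos by (intro lipschitz_onI) (simp_all add: dist_norm)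
  then have G_fst_lip: "K-lipschitz_on UNIV (\<lambda>z. fst (G z))"
    using lipschitz_on_compose2[OF _ lipschitz_on_fst] by fastforce
  have h_lip: "K-lipschitz_on UNIV (h t)" for t
    using lipschitz_on_compose2[OF lipschitz_on_fst lipschitz_on_subset[OF lipschitz_on_Pair_sections(1)[OF G_fst_lip]]]
    by (simp add: h_def)
  have h_int: "integrable \<mu> (h t)" if "\<mu> \<in> P2ac" for \<mu> t
    using integrable_lipschitz_on[OF h_lip] P2ac_integrable_norm[OF that] that
    by (simp add: P2ac_def prob_space.finite_measure)
  have param_bound: "norm (integral\<^sup>L q (h \<theta>) - integral\<^sup>L q (h \<theta>')) \<le> K * norm (\<theta> - \<theta>')"
    using q lipschitz_on_normD[OF lipschitz_on_Pair_sections(2)[OF G_fst_lip]]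
    by (intro prob_space.norm_integral_diff_le h_int) (auto simp: P2ac_def h_def)
  have W1_bound: "norm (integral\<^sup>L q (h \<theta>') - integral\<^sup>L q' (h \<theta>')) \<le> K * enn2real (W1 q q')"
    using q q' P2ac_integrable_norm[OF q] P2ac_integrable_norm[OF q']
    by (intro norm_integral_diff_le_enn2real_W1 W1_lt_top h_lip K_pos h_int) (auto simp: P2ac_def)
  have "grad_theta_F G \<theta> q - grad_theta_F G \<theta>' q'
      = - ((integral\<^sup>L q (h \<theta>) - integral\<^sup>L q (h \<theta>')) + (integral\<^sup>L q (h \<theta>') - integral\<^sup>L q' (h \<theta>')))"
    by (simp add: grad_theta_F_def h_def)
  then have "norm (grad_theta_F G \<theta> q - grad_theta_F G \<theta>' q')
      \<le> norm (integral\<^sup>L q (h \<theta>) - integral\<^sup>L q (h \<theta>')) + norm (integral\<^sup>L q (h \<theta>') - integral\<^sup>L q' (h \<theta>'))"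
    by (simp only: norm_minus_cancel norm_triangle_ineq)
  then show "norm (grad_theta_F G \<theta> q - grad_theta_F G \<theta>' q')
      \<le> K * (norm (\<theta> - \<theta>') + enn2real (W1 q q'))"
    using param_bound W1_bound by (simp add: distrib_left)
qed

end
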